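(* Let $\mathcal C$ be an infinitary clone $\tau$-algebra and $a\in C$. Then $a$ is central if and only if the following hold for all elements of $C$: (C1) $q(a,x,x,\dots)=x$; (C2) $q\big(a,\,q(a,x_0^0,x_0^1,\dots),\,q(a,x_1^0,x_1^1,\dots),\,q(a,x_2^0,x_2^1,\dots),\dots\big)=q(a,x_0^0,x_1^1,x_2^2,\dots)$; (C3) $q\big(a,\,q(y_0,z_0^0,z_1^0,\dots),\,q(y_1,z_0^1,z_1^1,\dots),\dots\big)=q\big(q(a,y_0,y_1,\dots),\,q(a,z_0^0,z_0^1,\dots),\,q(a,z_1^0,z_1^1,\dots),\dots\big)$.
   Context: $\tau$ is a set of $\omega$-ary operation symbols disjoint from $\{q\}\cup\{e_i:i\in\omega\}$. An infinitary clone $\tau$-algebra is an algebra $\mathcal C$ with constants $e_i$ ($i\in\omega$), a constant $f$ for each $f\in\tau$, and an $\omega$-ary operation $q$, satisfying (N1) $q(e_i,x_0,x_1,\dots)=x_i$; (N2) $q(x,e_0,e_1,\dots)=x$; (N3) $q(q(x,y_0,y_1,\dots),\boldsymbol z)=q(x,q(y_0,\boldsymbol z),q(y_1,\boldsymbol z),\dots)$ with $\boldsymbol z=(z_0,z_1,\dots)$. A sequence $(\theta_0,\theta_1,\dots)$ of congruences of $\mathcal C$ is a sequence of complementary factor congruences if $\bigcap_{i\in\omega}\theta_i$ is the identity relation on $C$ and for every $s\in C^\omega$ there is $b\in C$ with $(b,s_i)\in\theta_i$ for all $i\in\omega$. An element $a\in C$ is central if the principal congruences $\theta(a,e_i)$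 generated by the pairs $(a,e_i)$, $i\in\omega$, form a sequence of complementary factor congruences. *)

theory Defs
  imports Main
begin

text \<open>An infinitary clone tau-algebra, given by its carrier C, the constants e_i,
 the constants fc g for g in T (the symbols of tau), and the omega-ary operation q.\<close>

definition seq_in :: "'a set \<Rightarrow> (nat \<Rightarrow> 'a) \<Rightarrow> bool" where
  "seq_in C s \<longleftrightarrow> (\<forall>i. s i \<in> C)"

definition clone_alg ::
  "'a set \<Rightarrow> (nat \<Rightarrow> 'a) \<Rightarrow> ('a \<Rightarrow> (nat \<Rightarrow> 'a) \<Rightarrow> 'a) \<Rightarrow> 'b set \<Rightarrow> ('b \<Rightarrow> 'a) \<Rightarrow> bool" where
  "clone_alg C e q T fc \<longleftrightarrow>
     (\<forall>i. e i \<in> C) \<and> (\<forall>g\<in>T. fc g \<in> C) \<and>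
     (\<forall>x\<in>C. \<forall>y. seq_in C y \<longrightarrow> q x y \<in> C) \<and>
     (\<forall>i. \<forall>x. seq_in C x \<longrightarrow> q (e i) x = x i) \<and>
     (\<forall>x\<in>C. q x e = x) \<and>
     (\<forall>x\<in>C. \<forall>y z. seq_in C y \<longrightarrow> seq_in C z \<longrightarrow>
        q (q x y) z = q x (\<lambda>i. q (y i) z))"

text \<open>Congruences of the algebra (constants are trivially respected; q must be).\<close>
definition congruence :: "'a set \<Rightarrow> ('a \<Rightarrow> (nat \<Rightarrow> 'a) \<Rightarrow> 'a) \<Rightarrow> 'a rel \<Rightarrow> bool" where
  "congruence C q \<theta> \<longleftrightarrow> equiv C \<theta> \<and>
     (\<forall>x x' y y'. (x, x') \<in> \<theta> \<longrightarrow> seq_in C y \<longrightarrow> seq_in C y' \<longrightarrow>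
        (\<forall>i. (y i, y' i) \<in> \<theta>) \<longrightarrow> (q x y, q x' y') \<in> \<theta>)"

definition principal_cong :: "'a set \<Rightarrow> ('a \<Rightarrow> (nat \<Rightarrow> 'a) \<Rightarrow> 'a) \<Rightarrow> 'a \<Rightarrow> 'a \<Rightarrow> 'a rel" where
  "principal_cong C q a b = \<Inter> {\<theta>. congruence C q \<theta> \<and> (a, b) \<in> \<theta>}"

definition compl_factor_congs ::
  "'a set \<Rightarrow> ('a \<Rightarrow> (nat \<Rightarrow> 'a) \<Rightarrow> 'a) \<Rightarrow> (nat \<Rightarrow> 'a rel) \<Rightarrow> bool" where
  "compl_factor_congs C q \<Theta> \<longleftrightarrow>
     (\<forall>i. congruence C q (\<Theta> i)) \<and>
     (\<Inter>i. \<Theta> i) = Id_on C \<and>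
     (\<forall>s. seq_in C s \<longrightarrow> (\<exists>b\<in>C. \<forall>i. (b, s i) \<in> \<Theta> i))"

definition central :: "'a set \<Rightarrow> (nat \<Rightarrow> 'a) \<Rightarrow> ('a \<Rightarrow> (nat \<Rightarrow> 'a) \<Rightarrow> 'a) \<Rightarrow> 'a \<Rightarrow> bool" where
  "central C e q a \<longleftrightarrow> compl_factor_congs C q (\<lambda>i. principal_cong C q a (e i))"

end

theory Submission
  imports Defs
begin

text \<open>If a is central, then a \<equiv> e_i modulo \<theta>(a,e_i) gives q(a,s) \<equiv> s_i, so both sides of
  each identity (C1)--(C3) agree modulo every \<theta>(a,e_i), and these congruences intersect to the
  identity. Conversely, under (C1)--(C3) the principal congruence \<theta>(a,e_i) is the relation
  x \<sim>_i y :\<longleftrightarrow> q(a, w[i:=x]) = q(a, w[i:=y]) for all w: (C3) makes \<sim>_i a congruence, (C2) puts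
  (a,e_i) into it, (C1) makes it smaller than any congruence containing (a,e_i) and, with (C2),
  makes the \<sim>_i separate points; q(a,s) is the element glued from any sequence s.\<close>

lemma congruence_refl: "congruence C q \<theta> \<Longrightarrow> x \<in> C \<Longrightarrow> (x, x) \<in> \<theta>"
  unfolding congruence_def equiv_def refl_on_def by blast

lemma congruence_sym: "congruence C q \<theta> \<Longrightarrow> (x, y) \<in> \<theta> \<Longrightarrow> (y, x) \<in> \<theta>"
  unfolding congruence_def equiv_def by (meson symD)

lemma congruence_trans: "congruence C q \<theta> \<Longrightarrow> (x, y) \<in> \<theta> \<Longrightarrow> (y, z) \<in> \<theta> \<Longrightarrow> (x, z) \<in> \<theta>"
  unfolding congruence_def equiv_def by (meson transD)

lemma congruence_q:
  "congruence C q \<theta> \<Longrightarrow> (x, x') \<in> \<theta> \<Longrightarrow> seq_in C y \<Longrightarrow> seq_in C y' \<Longrightarrow> (\<forall>k. (y k, y' k) \<in> \<theta>)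
    \<Longrightarrow> (q x y, q x' y') \<in> \<theta>"
  unfolding congruence_def by blast

lemma principal_cong_generator: "(a, b) \<in> principal_cong C q a b"
  unfolding principal_cong_def by blast

lemma principal_cong_eqI:
  "congruence C q \<theta> \<Longrightarrow> (a, b) \<in> \<theta> \<Longrightarrow> (\<And>\<theta>'. congruence C q \<theta>' \<Longrightarrow> (a, b) \<in> \<theta>' \<Longrightarrow> \<theta> \<subseteq> \<theta>')
    \<Longrightarrow> principal_cong C q a b = \<theta>"
  unfolding principal_cong_def by blast

lemma central_principal_congs:
  assumes "central C e q a"
  shows "congruence C q (principal_cong C q a (e i))"
    and "u \<in> C \<Longrightarrow> v \<in> C \<Longrightarrow> (\<And>i. (u, v) \<in> principal_cong C q a (e i)) \<Longrightarrow> u = v"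
proof -
  have separating: "(\<Inter>i. principal_cong C q a (e i)) = Id_on C"
    using assms unfolding central_def compl_factor_congs_def by blast
  show "u = v" if "\<And>i. (u, v) \<in> principal_cong C q a (e i)"
  proof -
    have "(u, v) \<in> (\<Inter>i. principal_cong C q a (e i))" using that by blast
    then show "u = v" unfolding separating by (simp add: Id_on_def)
  qed
  show "congruence C q (principal_cong C q a (e i))"
    using assms unfolding central_def compl_factor_congs_def by blast
qed

locale clone_algebra =
  fixes C :: "'a set" and e :: "nat \<Rightarrow> 'a" and q :: "'a \<Rightarrow> (nat \<Rightarrow> 'a) \<Rightarrow> 'a"
    and T :: "'b set" and fc :: "'b \<Rightarrow> 'a"
  assumes clone_alg: "clone_alg C e q T fc"
begin

lemma q_closed: "x \<in> C \<Longrightarrow> seq_in C y \<Longrightarrow> q x y \<in> C"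
  using clone_alg unfolding clone_alg_def by blast

lemma q_proj: "seq_in C x \<Longrightarrow> q (e i) x = x i"
  using clone_alg unfolding clone_alg_def by blast

lemma q_unit: "x \<in> C \<Longrightarrow> q x e = x"
  using clone_alg unfolding clone_alg_def by blast

lemma e_in: "e i \<in> C"
  using clone_alg unfolding clone_alg_def by blast

lemma q_proj_mod_cong:
  assumes \<theta>: "congruence C q \<theta>" and generator: "(a, e i) \<in> \<theta>" and s: "seq_in C s"
  shows "(q a s, s i) \<in> \<theta>"
proof -
  have "(s k, s k) \<in> \<theta>" for k using congruence_refl[OF \<theta>] s by (simp add: seq_in_def)
  then have "(q a s, q (e i) s) \<in> \<theta>" using congruence_q[OF \<theta> generator s s] by blast
  then show ?thesis using q_proj[OF s] by simp
qed

context
  fixes a :: 'a and \<theta> :: "nat \<Rightarrow> 'a rel"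
  assumes a_in: "a \<in> C"
    and cong: "\<And>i. congruence C q (\<theta> i)"
    and generator: "\<And>i. (a, e i) \<in> \<theta> i"
    and separating: "\<And>u v. u \<in> C \<Longrightarrow> v \<in> C \<Longrightarrow> (\<And>i. (u, v) \<in> \<theta> i) \<Longrightarrow> u = v"
begin

lemma q_proj_mod: "seq_in C s \<Longrightarrow> (q a s, s i) \<in> \<theta> i"
  by (rule q_proj_mod_cong[OF cong[of i] generator[of i]])

lemma eq_if_congruent_to_same:
  assumes "u \<in> C" "v \<in> C" and u: "\<And>i. (u, t i) \<in> \<theta> i" and v: "\<And>i. (v, t i) \<in> \<theta> i"
  shows "u = v"
  using assms(1,2) congruence_trans[OF cong u congruence_sym[OF cong v]] by (rule separating)

lemma separating_const:
  assumes x: "x \<in> C"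
  shows "q a (\<lambda>_. x) = x"
proof (rule eq_if_congruent_to_same[where t = "\<lambda>_. x"])
  have const_in: "seq_in C (\<lambda>_. x)" using x by (simp add: seq_in_def)
  show "q a (\<lambda>_. x) \<in> C" using q_closed[OF a_in const_in] .
  show "(q a (\<lambda>_. x), x) \<in> \<theta> i" for i using q_proj_mod[OF const_in] .
  show "(x, x) \<in> \<theta> i" for i by (rule congruence_refl[OF cong[of i] x])
qed (fact x)

lemma separating_diag:
  assumes x: "\<forall>i j. x i j \<in> C"
  shows "q a (\<lambda>i. q a (x i)) = q a (\<lambda>i. x i i)"
proof (rule eq_if_congruent_to_same[where t = "\<lambda>i. x i i"])
  have rows: "seq_in C (x i)" for i using x by (simp add: seq_in_def)
  have outer: "seq_in C (\<lambda>i. q a (x i))" using q_closed[OF a_in rows] by (simp add: seq_in_def)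
  have diag: "seq_in C (\<lambda>i. x i i)" using x by (simp add: seq_in_def)
  show "q a (\<lambda>i. q a (x i)) \<in> C" "q a (\<lambda>i. x i i) \<in> C"
    using q_closed[OF a_in outer] q_closed[OF a_in diag] .
  show "(q a (\<lambda>i. x i i), x i i) \<in> \<theta> i" for i using q_proj_mod[OF diag] by simp
  show "(q a (\<lambda>i. q a (x i)), x i i) \<in> \<theta> i" for i
    using congruence_trans[OF cong[of i] q_proj_mod[OF outer, of i] q_proj_mod[OF rows, of i]] by simp
qed

lemma separating_interchange:
  assumes y: "seq_in C y" and z: "\<forall>i j. z i j \<in> C"
  shows "q a (\<lambda>j. q (y j) (\<lambda>i. z i j)) = q (q a y) (\<lambda>i. q a (z i))"
proof (rule eq_if_congruent_to_same[where t = "\<lambda>j. q (y j) (\<lambda>i. z i j)"])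
  have rows: "seq_in C (z i)" for i using z by (simp add: seq_in_def)
  have cols: "seq_in C (\<lambda>i. z i j)" for j using z by (simp add: seq_in_def)
  have lhs_args: "seq_in C (\<lambda>j. q (y j) (\<lambda>i. z i j))"
    using y q_closed[OF _ cols] by (simp add: seq_in_def)
  have rhs_args: "seq_in C (\<lambda>i. q a (z i))" using q_closed[OF a_in rows] by (simp add: seq_in_def)
  show "q a (\<lambda>j. q (y j) (\<lambda>i. z i j)) \<in> C" using q_closed[OF a_in lhs_args] .
  show "q (q a y) (\<lambda>i. q a (z i)) \<in> C" using q_closed[OF q_closed[OF a_in y] rhs_args] .
  show "(q a (\<lambda>j. q (y j) (\<lambda>i. z i j)), q (y j) (\<lambda>i. z i j)) \<in> \<theta> j" for j
    using q_proj_mod[OF lhs_args] by simp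
  show "(q (q a y) (\<lambda>i. q a (z i)), q (y j) (\<lambda>i. z i j)) \<in> \<theta> j" for j
  proof -
    have "\<forall>i. (q a (z i), z i j) \<in> \<theta> j" using q_proj_mod[OF rows] by blast
    then show ?thesis using congruence_q[OF cong[of j] q_proj_mod[OF y, of j] rhs_args cols[of j]] by simp
  qed
qed

end

end

locale central_element = clone_algebra +
  fixes a :: 'a
  assumes a_in: "a \<in> C"
    and const: "\<And>x. x \<in> C \<Longrightarrow> q a (\<lambda>_. x) = x"
    and diag: "\<And>x. \<forall>i j. x i j \<in> C \<Longrightarrow> q a (\<lambda>i. q a (x i)) = q a (\<lambda>i. x i i)"
    and interchange: "\<And>y z. seq_in C y \<Longrightarrow> \<forall>i j. z i j \<in> C \<Longrightarrow>
      q a (\<lambda>j. q (y j) (\<lambda>i. z i j)) = q (q a y) (\<lambda>i. q a (z i))"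
begin

definition coord_rel :: "nat \<Rightarrow> 'a rel" where
  "coord_rel i = {(x, y). x \<in> C \<and> y \<in> C \<and> (\<forall>w. seq_in C w \<longrightarrow> q a (w(i := x)) = q a (w(i := y)))}"

lemma coord_relD: "(x, y) \<in> coord_rel i \<Longrightarrow> seq_in C w \<Longrightarrow> q a (w(i := x)) = q a (w(i := y))"
  unfolding coord_rel_def by blast

lemma coord_rel_in: "(x, y) \<in> coord_rel i \<Longrightarrow> x \<in> C \<and> y \<in> C"
  unfolding coord_rel_def by blast

lemma q_upd_q_collapse:
  assumes w: "seq_in C w" and s: "seq_in C s"
  shows "q a (w(i := q a s)) = q a (w(i := s i))"
proof -
  define x where "x j = (if j = i then s else (\<lambda>_. w j))" for j
  have "q a (w(i := q a s)) = q a (\<lambda>j. q a (x j))"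
    using const w by (auto simp: x_def seq_in_def intro!: arg_cong[where f = "q a"])
  also have "\<dots> = q a (\<lambda>j. x j j)"
    using w s by (intro diag) (simp add: x_def seq_in_def)
  also have "\<dots> = q a (w(i := s i))" by (auto simp: x_def intro!: arg_cong[where f = "q a"])
  finally show ?thesis .
qed

lemma coord_rel_sym: "(x, y) \<in> coord_rel i \<Longrightarrow> (y, x) \<in> coord_rel i"
  unfolding coord_rel_def by auto

lemma q_upd_const: "(x, y) \<in> coord_rel i \<Longrightarrow> q a ((\<lambda>_. x)(i := y)) = x"
proof -
  assume xy: "(x, y) \<in> coord_rel i"
  then have x: "x \<in> C" using coord_rel_in by blast
  have "q a ((\<lambda>_. x)(i := y)) = q a ((\<lambda>_. x)(i := x))"
    using coord_relD[OF coord_rel_sym[OF xy]] x by (simp add: seq_in_def)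
  also have "\<dots> = x" using const[OF x] by (simp add: fun_upd_def)
  finally show ?thesis .
qed

text \<open>(C3) applied to the column e_0, \<dots>, u, e_0, \<dots> (with u at position i) against the rows
  w[i := t_k]: positions j \<noteq> i project back to w_j.\<close>

lemma q_upd_q_interchange:
  assumes w: "seq_in C w" and u: "u \<in> C" and t: "seq_in C t"
  shows "q a (w(i := q u t)) = q (q a ((\<lambda>_. e 0)(i := u))) (\<lambda>k. q a (w(i := t k)))"
proof -
  define y where "y = (\<lambda>_. e 0)(i := u)"
  define z where "z k = w(i := t k)" for k
  have y_in: "seq_in C y" using u e_in by (simp add: y_def seq_in_def)
  have z_in: "\<forall>k j. z k j \<in> C" using w t by (simp add: z_def seq_in_def)
  have columns: "w(i := q u t) = (\<lambda>j. q (y j) (\<lambda>k. z k j))"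
  proof
    fix j
    have "seq_in C (\<lambda>k. z k j)" using z_in by (simp add: seq_in_def)
    then show "(w(i := q u t)) j = q (y j) (\<lambda>k. z k j)"
      by (cases "j = i") (simp_all add: y_def z_def q_proj)
  qed
  then have "q a (w(i := q u t)) = q (q a y) (\<lambda>k. q a (z k))"
    using interchange[OF y_in z_in] by simp
  then show ?thesis by (simp only: y_def z_def)
qed

lemma coord_rel_congruence: "congruence C q (coord_rel i)"
  unfolding congruence_def
proof (intro conjI allI impI)
  show "equiv C (coord_rel i)"
    unfolding equiv_def refl_on_def sym_def trans_def coord_rel_def by auto
next
  fix x x' y y'
  assume xx': "(x, x') \<in> coord_rel i" and y: "seq_in C y" and y': "seq_in C y'"
    and yy': "\<forall>k. (y k, y' k) \<in> coord_rel i"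
  have x: "x \<in> C" and x': "x' \<in> C" using coord_rel_in[OF xx'] by auto
  have "q a (w(i := q x y)) = q a (w(i := q x' y'))" if w: "seq_in C w" for w
  proof -
    have "q a ((\<lambda>_. e 0)(i := x)) = q a ((\<lambda>_. e 0)(i := x'))"
      using coord_relD[OF xx'] e_in by (simp add: seq_in_def)
    moreover have "(\<lambda>k. q a (w(i := y k))) = (\<lambda>k. q a (w(i := y' k)))"
      using coord_relD yy' w by blast
    ultimately show ?thesis
      using q_upd_q_interchange[OF w x y] q_upd_q_interchange[OF w x' y'] by simp
  qed
  then show "(q x y, q x' y') \<in> coord_rel i"
    unfolding coord_rel_def using q_closed[OF x y] q_closed[OF x' y'] by blast
qed

lemma coord_rel_generator: "(a, e i) \<in> coord_rel i"
proof -
  have "q a (w(i := a)) = q a (w(i := e i))" if "seq_in C w" for w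
    using q_upd_q_collapse[OF that, of e i] q_unit[OF a_in] e_in by (simp add: seq_in_def)
  then show ?thesis unfolding coord_rel_def using a_in e_in by blast
qed

lemma coord_rel_q_proj: "seq_in C s \<Longrightarrow> (q a s, s i) \<in> coord_rel i"
  unfolding coord_rel_def using q_upd_q_collapse q_closed[OF a_in] by (auto simp: seq_in_def)

lemma coord_rel_least:
  assumes \<theta>: "congruence C q \<theta>" and generator: "(a, e i) \<in> \<theta>" and xy: "(x, y) \<in> coord_rel i"
  shows "(x, y) \<in> \<theta>"
proof -
  define w where "w = (\<lambda>_. y)(i := x)"
  have w_in: "seq_in C w" using coord_rel_in[OF xy] by (simp add: w_def seq_in_def)
  have "(q a w, w i) \<in> \<theta>" using q_proj_mod_cong[OF \<theta> generator w_in] .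
  then have "(y, x) \<in> \<theta>" using q_upd_const[OF coord_rel_sym[OF xy]] by (simp add: w_def)
  then show ?thesis using congruence_sym[OF \<theta>] by blast
qed

lemma principal_cong_eq_coord_rel: "principal_cong C q a (e i) = coord_rel i"
  using coord_rel_congruence coord_rel_generator coord_rel_least
  by (intro principal_cong_eqI) auto

lemma coord_rel_separating:
  assumes "\<And>j. (x, y) \<in> coord_rel j"
  shows "x = y"
proof -
  have x: "x \<in> C" and y: "y \<in> C" using coord_rel_in assms by blast+
  define v where "v j = ((\<lambda>_. x)(j := y) :: nat \<Rightarrow> 'a)" for j
  have "x = q a (\<lambda>j. q a (v j))" using q_upd_const[OF assms] const[OF x] by (simp add: v_def)
  also have "\<dots> = q a (\<lambda>j. v j j)" using x y by (intro diag) (simp add: v_def)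
  also have "\<dots> = y" using const[OF y] by (simp add: v_def)
  finally show ?thesis .
qed

lemma is_central: "central C e q a"
  unfolding central_def compl_factor_congs_def principal_cong_eq_coord_rel
proof (intro conjI allI impI)
  show "congruence C q (coord_rel i)" for i by (rule coord_rel_congruence)
  show "(\<Inter>i. coord_rel i) = Id_on C"
    using coord_rel_separating by (auto simp: coord_rel_def Id_on_def)
  show "\<exists>b\<in>C. \<forall>i. (b, s i) \<in> coord_rel i" if "seq_in C s" for s
    using q_closed[OF a_in that] coord_rel_q_proj[OF that] by blast
qed

end

theorem lemma6p12:
  fixes C :: "'a set" and e :: "nat \<Rightarrow> 'a" and q :: "'a \<Rightarrow> (nat \<Rightarrow> 'a) \<Rightarrow> 'a"
    and T :: "'b set" and fc :: "'b \<Rightarrow> 'a" and a :: 'a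
  assumes "clone_alg C e q T fc" and "a \<in> C"
  shows "central C e q a \<longleftrightarrow>
    ((\<forall>x\<in>C. q a (\<lambda>_. x) = x) \<and>
     (\<forall>x :: nat \<Rightarrow> nat \<Rightarrow> 'a. (\<forall>i j. x i j \<in> C) \<longrightarrow>
        q a (\<lambda>i. q a (x i)) = q a (\<lambda>i. x i i)) \<and>
     (\<forall>(y :: nat \<Rightarrow> 'a) (z :: nat \<Rightarrow> nat \<Rightarrow> 'a). seq_in C y \<longrightarrow> (\<forall>i j. z i j \<in> C) \<longrightarrow>
        q a (\<lambda>j. q (y j) (\<lambda>i. z i j)) = q (q a y) (\<lambda>i. q a (z i))))"
    (is "_ \<longleftrightarrow> ?identities")
proof -
  interpret clone_algebra C e q T fc using assms(1) by unfold_locales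
  show ?thesis
  proof
    assume central: "central C e q a"
    let ?\<theta> = "\<lambda>i. principal_cong C q a (e i)"
    note separating_congs = assms(2) central_principal_congs(1)[OF central]
      principal_cong_generator central_principal_congs(2)[OF central]
    show ?identities
      using separating_const[of a ?\<theta>, OF separating_congs]
        separating_diag[of a ?\<theta>, OF separating_congs]
        separating_interchange[of a ?\<theta>, OF separating_congs] by blast
  next
    assume identities: ?identities
    interpret central_element C e q T fc a
      using assms(2) identities by unfold_locales blast+
    show "central C e q a" by (rule is_central)
  qed
qed

end
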